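(* For all integers $n\geq 2$, \[g(n+1)<f(n)+\frac{1000}{\mu(n-1)^5}.\]
   Context: Let $\mu(m)=\pi\sqrt{m}$. For an integer $n\geq 2$ put $x=\mu(n-1)$, $y=\mu(n)$, $z=\mu(n+1)$, and define \[f(n)=e^{x-2y+z}\,\frac{y^{14}(x^5-x^4-1)(z^5-z^4-1)}{x^7z^7(y^5-y^4+1)^2},\qquad g(n)=e^{x-2y+z}\,\frac{y^{14}(x^5-x^4+1)(z^5-z^4+1)}{x^7z^7(y^5-y^4-1)^2}.\] Thus, with $w=\mu(n+2)$, $g(n+1)=e^{y-2z+w}\dfrac{z^{14}(y^5-y^4+1)(w^5-w^4+1)}{y^7w^7(z^5-z^4-1)^2}$. *)

theory Defs
  imports Complex_Main
begin

definition mu :: "real \<Rightarrow> real" where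
  "mu m = pi * sqrt m"

definition f_fun :: "nat \<Rightarrow> real" where
  "f_fun n = (let x = mu (real n - 1); y = mu (real n); z = mu (real n + 1) in
     exp (x - 2*y + z) * (y^14 * (x^5 - x^4 - 1) * (z^5 - z^4 - 1)) /
       (x^7 * z^7 * (y^5 - y^4 + 1)^2))"

definition g_fun :: "nat \<Rightarrow> real" where
  "g_fun n = (let x = mu (real n - 1); y = mu (real n); z = mu (real n + 1) in
     exp (x - 2*y + z) * (y^14 * (x^5 - x^4 + 1) * (z^5 - z^4 + 1)) /
       (x^7 * z^7 * (y^5 - y^4 - 1)^2))"

end

theory Submission
  imports Defs "HOL-Analysis.Complex_Transcendental"
begin

text \<open>Write \<open>a = n - 1\<close> and \<open>u m = 1 / mu m\<close>. Both \<open>f n\<close> and \<open>g (n + 1)\<close> factor as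
  the exponential of a second difference of \<open>mu\<close>, the rational factor \<open>1 + 1 / (a (a + 2))\<close>
  produced by the powers of \<open>mu\<close>, and a quotient of the factors \<open>1 - u - u\<^sup>5\<close> and
  \<open>1 - u + u\<^sup>5\<close>. Concavity of \<open>mu\<close> bounds the exponential by 1, and passing from \<open>f n\<close> to
  \<open>g (n + 1)\<close> multiplies it by the exponential of a third difference of \<open>mu\<close>, which is
  \<open>O (u a ^ 5)\<close>; the rational factor decreases. The function \<open>1 - u - u\<^sup>5\<close> is log-concave in
  \<open>m\<close> with second logarithmic derivative \<open>O (u ^ 5)\<close>, and \<open>1 - u + u\<^sup>5\<close> exceeds it by a factor
  \<open>1 + O (u ^ 5)\<close>, so the quotient in \<open>g (n + 1)\<close> is at most the one in \<open>f n\<close> times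
  \<open>1 + O (u a ^ 5)\<close>. Altogether \<open>g (n + 1) \<le> f n (1 + 742 u a ^ 5)\<close> with \<open>f n \<le> 9 / 8\<close> for
  \<open>n \<ge> 3\<close>; the case \<open>n = 2\<close> is a direct numerical estimate.\<close>

lemma second_difference_eq_deriv2:
  fixes F F' F'' :: "real \<Rightarrow> real"
  assumes F': "\<And>m. t \<le> m \<Longrightarrow> m \<le> t + 2 \<Longrightarrow> (F has_real_derivative F' m) (at m)"
    and F'': "\<And>m. t \<le> m \<Longrightarrow> m \<le> t + 2 \<Longrightarrow> (F' has_real_derivative F'' m) (at m)"
  obtains \<eta> where "t < \<eta>" "\<eta> < t + 2" "F (t + 2) - 2 * F (t + 1) + F t = F'' \<eta>"
proof -
  have "((\<lambda>s. F (s + 1) - F s) has_real_derivative F' (s + 1) - F' s) (at s)"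
    if "t \<le> s" "s \<le> t + 1" for s
    using F'[of "s + 1"] F'[of s] that by (auto intro!: derivative_intros simp: DERIV_shift)
  then obtain \<xi> where \<xi>: "t < \<xi>" "\<xi> < t + 1"
    and "F (t + 1 + 1) - F (t + 1) - (F (t + 1) - F t) = F' (\<xi> + 1) - F' \<xi>"
    using MVT2[of t "t + 1" "\<lambda>s. F (s + 1) - F s" "\<lambda>s. F' (s + 1) - F' s"] by auto
  moreover obtain \<eta> where "\<xi> < \<eta>" "\<eta> < \<xi> + 1" "F' (\<xi> + 1) - F' \<xi> = F'' \<eta>"
    using MVT2[of \<xi> "\<xi> + 1" F' F''] F'' \<xi> by auto
  ultimately show thesis
    by (intro that[of \<eta>]) (auto simp: algebra_simps)
qed

lemma third_difference_eq_deriv3: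
  fixes F F' F'' F''' :: "real \<Rightarrow> real"
  assumes F': "\<And>m. t \<le> m \<Longrightarrow> m \<le> t + 3 \<Longrightarrow> (F has_real_derivative F' m) (at m)"
    and F'': "\<And>m. t \<le> m \<Longrightarrow> m \<le> t + 3 \<Longrightarrow> (F' has_real_derivative F'' m) (at m)"
    and F''': "\<And>m. t \<le> m \<Longrightarrow> m \<le> t + 3 \<Longrightarrow> (F'' has_real_derivative F''' m) (at m)"
  obtains \<eta> where "t < \<eta>" "\<eta> < t + 3"
    "F (t + 3) - 3 * F (t + 2) + 3 * F (t + 1) - F t = F''' \<eta>"
proof -
  have "((\<lambda>s. F (s + 1) - F s) has_real_derivative F' (s + 1) - F' s) (at s)"
    if "t \<le> s" "s \<le> t + 2" for s
    using F'[of "s + 1"] F'[of s] that by (auto intro!: derivative_intros simp: DERIV_shift)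
  moreover have "((\<lambda>s. F' (s + 1) - F' s) has_real_derivative F'' (s + 1) - F'' s) (at s)"
    if "t \<le> s" "s \<le> t + 2" for s
    using F''[of "s + 1"] F''[of s] that by (auto intro!: derivative_intros simp: DERIV_shift)
  ultimately obtain \<xi> where \<xi>: "t < \<xi>" "\<xi> < t + 2"
    and "(F (t + 3) - F (t + 2)) - 2 * (F (t + 2) - F (t + 1)) + (F (t + 1) - F t)
      = F'' (\<xi> + 1) - F'' \<xi>"
    by (rule second_difference_eq_deriv2[of t "\<lambda>s. F (s + 1) - F s"]) (auto simp: add.assoc)
  moreover obtain \<eta> where "\<xi> < \<eta>" "\<eta> < \<xi> + 1" "F'' (\<xi> + 1) - F'' \<xi> = F''' \<eta>"
    using MVT2[of \<xi> "\<xi> + 1" F'' F'''] F''' \<xi> by auto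
  ultimately show thesis
    by (intro that[of \<eta>]) (auto simp: algebra_simps)
qed

lemma mu_pos: "0 < m \<Longrightarrow> 0 < mu m"
  by (simp add: mu_def)

lemma mu_mono: "0 \<le> a \<Longrightarrow> a \<le> b \<Longrightarrow> mu a \<le> mu b"
  by (simp add: mu_def)

lemma mu_squared: "0 \<le> m \<Longrightarrow> mu m ^ 2 = pi ^ 2 * m"
  by (simp add: mu_def power_mult_distrib)

lemma mu_ge_3: "1 \<le> m \<Longrightarrow> 3 \<le> mu m"
  using pi_gt3 mult_mono[of 3 pi 1 "sqrt m"] by (simp add: mu_def)

lemma mu_ge_4: "2 \<le> m \<Longrightarrow> 4 \<le> mu m"
proof -
  assume "2 \<le> m"
  have "1.4 \<le> sqrt 2"
    by (rule real_le_rsqrt) (simp add: power2_eq_square)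
  also have "\<dots> \<le> sqrt m" using \<open>2 \<le> m\<close> by simp
  finally have "3 * 1.4 \<le> pi * sqrt m"
    using pi_gt3 by (intro mult_mono) auto
  then show ?thesis by (simp add: mu_def)
qed

lemma inverse_mu_antimono: "0 < a \<Longrightarrow> a \<le> b \<Longrightarrow> 1 / mu b \<le> 1 / mu a"
  using mu_pos[of a] mu_pos[of b] by (intro divide_left_mono mu_mono) auto

lemma has_real_derivative_mu:
  "0 < m \<Longrightarrow> (mu has_real_derivative pi ^ 2 / 2 * (1 / mu m)) (at m)"
  unfolding mu_def[abs_def]
  by (auto intro!: derivative_eq_intros simp: field_simps power2_eq_square)

lemma has_real_derivative_inverse_mu_power:
  assumes "0 < m"
  shows "((\<lambda>m. (1 / mu m) ^ k) has_real_derivative - (real k * pi ^ 2 / 2) * (1 / mu m) ^ (k + 2)) (at m)"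
proof -
  have "mu m \<noteq> 0" using mu_pos[OF assms] by simp
  have "((\<lambda>m. 1 / mu m) has_real_derivative - (pi ^ 2 / 2) * (1 / mu m) ^ 3) (at m)"
    using DERIV_inverse_fun[OF has_real_derivative_mu[OF assms] \<open>mu m \<noteq> 0\<close>]
    by (simp add: inverse_eq_divide power2_eq_square power3_eq_cube field_simps)
  from DERIV_power[OF this, of k] show ?thesis
    by (cases k) (simp_all add: field_simps power_add power3_eq_cube)
qed

lemma mu_derivatives:
  assumes "0 < m"
  shows "(mu has_real_derivative pi ^ 2 / 2 * (1 / mu m)) (at m)"
    and "((\<lambda>m. pi ^ 2 / 2 * (1 / mu m)) has_real_derivative - (pi ^ 4 / 4) * (1 / mu m) ^ 3) (at m)"
    and "((\<lambda>m. - (pi ^ 4 / 4) * (1 / mu m) ^ 3) has_real_derivative 3 * pi ^ 6 / 8 * (1 / mu m) ^ 5) (at m)"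
  using has_real_derivative_mu[OF assms]
    DERIV_cmult[OF has_real_derivative_inverse_mu_power[OF assms, of 1], of "pi ^ 2 / 2"]
    DERIV_cmult[OF has_real_derivative_inverse_mu_power[OF assms, of 3], of "- (pi ^ 4 / 4)"]
  by (simp_all add: power2_eq_square power4_eq_xxxx field_simps eval_nat_numeral)

lemma mu_second_difference_nonpos:
  assumes "0 < a"
  shows "mu a - 2 * mu (a + 1) + mu (a + 2) \<le> 0"
proof -
  obtain \<eta> where "a < \<eta>" "\<eta> < a + 2"
    "mu (a + 2) - 2 * mu (a + 1) + mu a = - (pi ^ 4 / 4) * (1 / mu \<eta>) ^ 3"
    by (rule second_difference_eq_deriv2[of a mu "\<lambda>m. pi ^ 2 / 2 * (1 / mu m)"])
      (use assms mu_derivatives in auto)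
  moreover have "0 \<le> pi ^ 4 / 4 * (1 / mu \<eta>) ^ 3"
    using mu_pos[of \<eta>] \<open>a < \<eta>\<close> assms by simp
  ultimately show ?thesis by linarith
qed

lemma mu_third_difference_le:
  assumes "0 < a"
  shows "mu (a + 3) - 3 * mu (a + 2) + 3 * mu (a + 1) - mu a \<le> 3 * pi ^ 6 / 8 * (1 / mu a) ^ 5"
proof -
  obtain \<eta> where "a < \<eta>" "\<eta> < a + 3"
    "mu (a + 3) - 3 * mu (a + 2) + 3 * mu (a + 1) - mu a = 3 * pi ^ 6 / 8 * (1 / mu \<eta>) ^ 5"
    by (rule third_difference_eq_deriv3[of a mu "\<lambda>m. pi ^ 2 / 2 * (1 / mu m)"
        "\<lambda>m. - (pi ^ 4 / 4) * (1 / mu m) ^ 3" "\<lambda>m. 3 * pi ^ 6 / 8 * (1 / mu m) ^ 5"])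
      (use assms mu_derivatives in auto)
  moreover have "(1 / mu \<eta>) ^ 5 \<le> (1 / mu a) ^ 5"
    using inverse_mu_antimono[OF assms, of \<eta>] mu_pos[of \<eta>] \<open>a < \<eta>\<close> assms
    by (intro power_mono) auto
  ultimately show ?thesis by simp
qed

lemma log_concave_second_difference:
  fixes F F' F'' :: "real \<Rightarrow> real"
  assumes F': "\<And>m. a \<le> m \<Longrightarrow> m \<le> a + 2 \<Longrightarrow> (F has_real_derivative F' m) (at m)"
    and F'': "\<And>m. a \<le> m \<Longrightarrow> m \<le> a + 2 \<Longrightarrow> (F' has_real_derivative F'' m) (at m)"
    and pos: "0 < F a"
    and mono: "\<And>m. a \<le> m \<Longrightarrow> m \<le> a + 2 \<Longrightarrow>
      F a \<le> F m \<and> 0 \<le> F' m \<and> F' m \<le> F' a \<and> F'' a \<le> F'' m \<and> F'' m \<le> 0"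
  shows "F a * F (a + 2) \<le> F (a + 1) ^ 2"
    and "F (a + 1) ^ 2 \<le> F a * F (a + 2) * exp ((F' a / F a) ^ 2 - F'' a / F a)"
proof -
  have F_pos: "0 < F m" if "a \<le> m" "m \<le> a + 2" for m
    using mono[OF that] pos by linarith
  have "((\<lambda>m. ln (F m)) has_real_derivative F' m / F m) (at m)"
    if "a \<le> m" "m \<le> a + 2" for m
    using DERIV_chain2[OF DERIV_ln_divide[OF F_pos[OF that]] F'[OF that]] by simp
  moreover have "((\<lambda>m. F' m / F m) has_real_derivative F'' m / F m - (F' m / F m) ^ 2) (at m)"
    if "a \<le> m" "m \<le> a + 2" for m
    using DERIV_divide[OF F''[OF that] F'[OF that]] F_pos[OF that]
    by (simp add: field_simps power2_eq_square)
  ultimately obtain \<eta> where \<eta>: "a < \<eta>" "\<eta> < a + 2" and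
    L: "ln (F (a + 2)) - 2 * ln (F (a + 1)) + ln (F a) = F'' \<eta> / F \<eta> - (F' \<eta> / F \<eta>) ^ 2"
    by (rule second_difference_eq_deriv2)
  note mono_\<eta> = mono[of \<eta>] F_pos[of \<eta>]
  have "- F'' \<eta> / F \<eta> \<le> - F'' a / F a"
    using mono_\<eta> \<eta> pos by (intro frac_le) auto
  moreover have "(F' \<eta> / F \<eta>) ^ 2 \<le> (F' a / F a) ^ 2"
    using mono_\<eta> \<eta> pos by (intro power_mono frac_le) auto
  moreover have "F'' \<eta> / F \<eta> \<le> 0"
    using mono_\<eta> \<eta> by (simp add: divide_nonpos_pos)
  moreover have "ln (F a * F (a + 2)) - ln (F (a + 1) ^ 2)
      = ln (F (a + 2)) - 2 * ln (F (a + 1)) + ln (F a)"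
    using pos F_pos[of "a + 1"] F_pos[of "a + 2"] by (simp add: ln_mult ln_realpow)
  ultimately have "ln (F a * F (a + 2)) \<le> ln (F (a + 1) ^ 2)"
    and "ln (F (a + 1) ^ 2) \<le> ln (F a * F (a + 2)) + ((F' a / F a) ^ 2 - F'' a / F a)"
    using L zero_le_power2[of "F' \<eta> / F \<eta>"] by linarith+
  then have "ln (F a * F (a + 2)) \<le> ln (F (a + 1) ^ 2)"
    and "ln (F (a + 1) ^ 2) \<le> ln (F a * F (a + 2) * exp ((F' a / F a) ^ 2 - F'' a / F a))"
    using pos F_pos[of "a + 2"] by (simp_all add: ln_mult)
  then show "F a * F (a + 2) \<le> F (a + 1) ^ 2"
    and "F (a + 1) ^ 2 \<le> F a * F (a + 2) * exp ((F' a / F a) ^ 2 - F'' a / F a)"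
    using pos F_pos[of "a + 1"] F_pos[of "a + 2"] by simp_all
qed

text \<open>With \<open>x = mu m\<close> these are \<open>(x\<^sup>5 - x\<^sup>4 \<mp> 1) / x\<^sup>5\<close>, the factors occurring
  in \<open>f\<close> and \<open>g\<close>.\<close>

definition P_minus :: "real \<Rightarrow> real" where
  "P_minus m = 1 - 1 / mu m - (1 / mu m) ^ 5"

definition P_plus :: "real \<Rightarrow> real" where
  "P_plus m = 1 - 1 / mu m + (1 / mu m) ^ 5"

lemma inverse_mu_bounds: "1 \<le> m \<Longrightarrow> 0 < 1 / mu m \<and> 1 / mu m \<le> 1 / 3"
  using mu_ge_3[of m] by (simp add: field_simps)

lemma inverse_mu_le_quarter: "2 \<le> m \<Longrightarrow> 0 < 1 / mu m \<and> 1 / mu m \<le> 1 / 4"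
  using mu_ge_4[of m] by (simp add: field_simps)

lemma P_minus_ge: "1 \<le> m \<Longrightarrow> 161 / 243 \<le> P_minus m"
proof -
  assume "1 \<le> m"
  define v where "v = 1 / mu m"
  have "0 < v" "v \<le> 1 / 3" using inverse_mu_bounds[OF \<open>1 \<le> m\<close>] by (simp_all add: v_def)
  moreover from this have "v ^ 5 \<le> (1 / 3) ^ 5" by (intro power_mono) auto
  then have "v ^ 5 \<le> 1 / 243" by (simp add: power_divide)
  ultimately show ?thesis unfolding P_minus_def v_def[symmetric] by linarith
qed

lemma P_minus_ge_749: "2 \<le> m \<Longrightarrow> 749 / 1000 \<le> P_minus m"
proof -
  assume "2 \<le> m"
  define v where "v = 1 / mu m"
  have "0 < v" "v \<le> 1 / 4" using inverse_mu_le_quarter[OF \<open>2 \<le> m\<close>] by (simp_all add: v_def)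
  moreover from this have "v ^ 5 \<le> (1 / 4) ^ 5" by (intro power_mono) auto
  then have "v ^ 5 \<le> 1 / 1024" by (simp add: power_divide)
  ultimately show ?thesis unfolding P_minus_def v_def[symmetric] by linarith
qed

lemma P_plus_bounds: "1 \<le> m \<Longrightarrow> 0 \<le> P_plus m \<and> P_plus m \<le> 1"
proof -
  assume "1 \<le> m"
  then have "0 < 1 / mu m" "1 / mu m \<le> 1 / 3" using inverse_mu_bounds by blast+
  moreover from this have "(1 / mu m) ^ 5 \<le> 1 / mu m"
    using power_decreasing[of 1 5 "1 / mu m"] by simp
  ultimately show ?thesis unfolding P_plus_def by simp
qed

lemma P_minus_le_P_plus: "0 < m \<Longrightarrow> P_minus m \<le> P_plus m"
  using mu_pos[of m] by (simp add: P_minus_def P_plus_def)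

lemma P_minus_mono: "0 < a \<Longrightarrow> a \<le> b \<Longrightarrow> P_minus a \<le> P_minus b"
  using inverse_mu_antimono[of a b] mu_pos[of b]
    power_mono[of "1 / mu b" "1 / mu a" 5] by (simp add: P_minus_def)

lemma P_plus_le:
  assumes "2 \<le> a" "a \<le> m"
  shows "P_plus m \<le> (1 + 3 * (1 / mu a) ^ 5) * P_minus m"
proof -
  have "1 / mu m \<le> 1 / mu a" "0 < 1 / mu m"
    using inverse_mu_antimono[of a m] mu_pos[of m] assms by auto
  then have "(1 / mu m) ^ 5 \<le> (1 / mu a) ^ 5" by (intro power_mono) auto
  moreover have "2 / 3 \<le> P_minus m"
    using P_minus_ge_749[of m] assms by simp
  ultimately have "2 * (1 / mu m) ^ 5 \<le> 3 * P_minus m * (1 / mu a) ^ 5"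
    using mult_mono[of 2 "3 * P_minus m" "(1 / mu m) ^ 5" "(1 / mu a) ^ 5"] mu_pos[of m] assms
    by simp
  then show ?thesis by (simp add: P_plus_def P_minus_def algebra_simps)
qed

definition dP_minus :: "real \<Rightarrow> real" where
  "dP_minus m = pi ^ 2 / 2 * (1 / mu m) ^ 3 + 5 * pi ^ 2 / 2 * (1 / mu m) ^ 7"

definition d2P_minus :: "real \<Rightarrow> real" where
  "d2P_minus m = - (3 * pi ^ 4 / 4 * (1 / mu m) ^ 5 + 35 * pi ^ 4 / 4 * (1 / mu m) ^ 9)"

lemma P_minus_derivatives:
  assumes "0 < m"
  shows "(P_minus has_real_derivative dP_minus m) (at m)"
    and "(dP_minus has_real_derivative d2P_minus m) (at m)"
proof -
  note power = has_real_derivative_inverse_mu_power[OF assms]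
  show "(P_minus has_real_derivative dP_minus m) (at m)"
    unfolding P_minus_def[abs_def]
    by (rule DERIV_cong[OF DERIV_diff[OF DERIV_diff[OF DERIV_const power[of 1, simplified]] power]])
      (simp add: dP_minus_def power_one_over power3_eq_cube)
  show "(dP_minus has_real_derivative d2P_minus m) (at m)"
    unfolding dP_minus_def[abs_def]
    by (rule DERIV_cong[OF DERIV_add[OF DERIV_cmult[OF power] DERIV_cmult[OF power]]])
      (simp add: d2P_minus_def power4_eq_xxxx power2_eq_square)
qed

lemma P_minus_log_concave:
  assumes "1 \<le> a"
  shows "P_minus a * P_minus (a + 2) \<le> P_minus (a + 1) ^ 2"
    and "P_minus (a + 1) ^ 2
      \<le> P_minus a * P_minus (a + 2) * exp ((dP_minus a / P_minus a) ^ 2 - d2P_minus a / P_minus a)"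
proof -
  have "P_minus a \<le> P_minus m \<and> 0 \<le> dP_minus m \<and> dP_minus m \<le> dP_minus a
      \<and> d2P_minus a \<le> d2P_minus m \<and> d2P_minus m \<le> 0" if "a \<le> m" for m
  proof -
    have "0 < 1 / mu m" "1 / mu m \<le> 1 / mu a"
      using mu_pos[of m] inverse_mu_antimono[of a m] assms that by auto
    then have "(1 / mu m) ^ k \<le> (1 / mu a) ^ k" "0 \<le> (1 / mu m) ^ k" for k
      by (auto intro: power_mono)
    then have pw: "pi ^ j * (1 / mu m) ^ k \<le> pi ^ j * (1 / mu a) ^ k" "0 \<le> pi ^ j * (1 / mu m) ^ k"
      for j k
      by (auto intro: mult_left_mono)
    show ?thesis
      using P_minus_mono[of a m] assms that pw[of 2 3] pw[of 2 7] pw[of 4 5] pw[of 4 9]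
      unfolding dP_minus_def d2P_minus_def by (intro conjI) linarith+
  qed
  moreover have "0 < P_minus a"
    using P_minus_ge[OF assms] by simp
  ultimately show "P_minus a * P_minus (a + 2) \<le> P_minus (a + 1) ^ 2"
    and "P_minus (a + 1) ^ 2
      \<le> P_minus a * P_minus (a + 2) * exp ((dP_minus a / P_minus a) ^ 2 - d2P_minus a / P_minus a)"
    using P_minus_derivatives assms
    by (auto intro!: log_concave_second_difference[of a P_minus dP_minus d2P_minus])
qed

lemma pi_power_le: "pi ^ k \<le> 3.1416 ^ k"
  using pi_approx by (intro power_mono) auto

lemma dP_minus_bounds:
  assumes "2 \<le> a"
  shows "0 \<le> dP_minus a \<and> dP_minus a \<le> 5.04 * (1 / mu a) ^ 3"
proof -
  define t where "t = 1 / mu a"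
  have t: "0 < t" "t \<le> 1 / 4"
    using inverse_mu_le_quarter[OF assms] by (simp_all add: t_def)
  then have "t ^ 4 \<le> (1 / 4) ^ 4"
    by (intro power_mono) auto
  moreover have "pi ^ 2 \<le> 9.87"
    by (rule order_trans[OF pi_power_le]) (simp add: power_divide)
  ultimately have "pi ^ 2 * (1 / 2 + 5 / 2 * t ^ 4) * t ^ 3 \<le> 9.87 * (1 / 2 + 5 / 2 * (1 / 4) ^ 4) * t ^ 3"
    using t by (intro mult_right_mono mult_mono add_left_mono) auto
  also have "\<dots> \<le> 5.04 * t ^ 3"
    using t by (intro mult_right_mono) (auto simp: power_divide)
  finally show ?thesis
    using t by (simp add: dP_minus_def t_def[symmetric] algebra_simps flip: power_add)
qed

lemma d2P_minus_bounds:
  assumes "2 \<le> a"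
  shows "- d2P_minus a \<le> 77 * (1 / mu a) ^ 5"
proof -
  define t where "t = 1 / mu a"
  have t: "0 < t" "t \<le> 1 / 4"
    using inverse_mu_le_quarter[OF assms] by (simp_all add: t_def)
  then have "t ^ 4 \<le> (1 / 4) ^ 4"
    by (intro power_mono) auto
  moreover have "pi ^ 4 \<le> 97.5"
    by (rule order_trans[OF pi_power_le]) (simp add: power_divide)
  ultimately have "pi ^ 4 * (3 / 4 + 35 / 4 * t ^ 4) * t ^ 5 \<le> 97.5 * (3 / 4 + 35 / 4 * (1 / 4) ^ 4) * t ^ 5"
    using t by (intro mult_right_mono mult_mono add_left_mono) auto
  also have "\<dots> \<le> 77 * t ^ 5"
    using t by (intro mult_right_mono) (auto simp: power_divide)
  finally show ?thesis
    by (simp add: d2P_minus_def t_def[symmetric] algebra_simps flip: power_add)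
qed

lemma P_minus_log_concavity_defect_le:
  assumes "2 \<le> a"
  shows "(dP_minus a / P_minus a) ^ 2 - d2P_minus a / P_minus a \<le> 125 * (1 / mu a) ^ 5"
proof -
  define t where "t = 1 / mu a"
  have t: "0 < t" "t \<le> 1 / 4"
    using inverse_mu_le_quarter[OF assms] by (simp_all add: t_def)
  have P: "749 / 1000 \<le> P_minus a"
    using P_minus_ge_749[OF assms] .
  have "(dP_minus a / P_minus a) ^ 2 \<le> (5.04 * t ^ 3 / (749 / 1000)) ^ 2"
    using dP_minus_bounds[OF assms] P t by (intro power_mono frac_le) (auto simp: t_def)
  also have "\<dots> = (5.04 / (749 / 1000)) ^ 2 * t * t ^ 5"
    by (simp add: eval_nat_numeral field_simps)
  also have "\<dots> \<le> (5.04 / (749 / 1000)) ^ 2 * (1 / 4) * t ^ 5"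
    using t by (intro mult_right_mono mult_left_mono) auto
  also have "\<dots> \<le> 12 * t ^ 5"
    using t by (intro mult_right_mono) (auto simp: power_divide)
  finally have X: "(dP_minus a / P_minus a) ^ 2 \<le> 12 * t ^ 5" .
  have "- d2P_minus a / P_minus a \<le> 77 * t ^ 5 / (749 / 1000)"
    using d2P_minus_bounds[OF assms] P t by (intro frac_le) (auto simp: t_def)
  also have "\<dots> \<le> 103 * t ^ 5"
    using t by (simp add: field_simps)
  finally have Y: "- d2P_minus a / P_minus a \<le> 103 * t ^ 5" .
  show ?thesis
    using X Y zero_le_power[of t 5] t(1) unfolding t_def[symmetric] minus_divide_left by linarith
qed

lemma mu_power_quotient:
  assumes "0 < a"
  shows "mu (a + 1) ^ 4 / (mu a ^ 2 * mu (a + 2) ^ 2) = 1 + 1 / (a * (a + 2))"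
proof -
  have "mu (a + 1) ^ 4 = (mu (a + 1) ^ 2) ^ 2"
    by simp
  also have "\<dots> = pi ^ 4 * (a * (a + 2) + 1)"
    using assms by (subst mu_squared) (simp_all add: algebra_simps eval_nat_numeral)
  moreover have "mu a ^ 2 * mu (a + 2) ^ 2 = pi ^ 4 * (a * (a + 2))"
    using assms mu_squared[of a] mu_squared[of "a + 2"] by (simp add: algebra_simps eval_nat_numeral)
  ultimately have "mu (a + 1) ^ 4 / (mu a ^ 2 * mu (a + 2) ^ 2) = (a * (a + 2) + 1) / (a * (a + 2))"
    by (simp only: mult_divide_mult_cancel_left_if) simp
  also have "\<dots> = 1 + 1 / (a * (a + 2))"
    using assms by (simp add: add_divide_distrib)
  finally show ?thesis .
qed

lemma quotient_normal_form:
  fixes x y z e :: real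
  assumes "x \<noteq> 0" "y \<noteq> 0" "z \<noteq> 0" "y ^ 5 - y ^ 4 + e \<noteq> 0"
  shows "y ^ 14 * (x ^ 5 - x ^ 4 - e) * (z ^ 5 - z ^ 4 - e) / (x ^ 7 * z ^ 7 * (y ^ 5 - y ^ 4 + e) ^ 2)
    = y ^ 4 / (x ^ 2 * z ^ 2)
      * ((1 - 1 / x - e * (1 / x) ^ 5) * (1 - 1 / z - e * (1 / z) ^ 5) / (1 - 1 / y + e * (1 / y) ^ 5) ^ 2)"
proof -
  have "1 - 1 / x - e * (1 / x) ^ 5 = (x ^ 5 - x ^ 4 - e) / x ^ 5"
    "1 - 1 / z - e * (1 / z) ^ 5 = (z ^ 5 - z ^ 4 - e) / z ^ 5"
    "1 - 1 / y + e * (1 / y) ^ 5 = (y ^ 5 - y ^ 4 + e) / y ^ 5"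
    using assms by (simp_all add: field_simps eval_nat_numeral)
  moreover have "y ^ 14 = y ^ 4 * y ^ 10" "x ^ 7 = x ^ 2 * x ^ 5" "z ^ 7 = z ^ 2 * z ^ 5"
    by (simp_all flip: power_add)
  ultimately show ?thesis
    using assms by (simp add: power_divide mult_ac)
qed

lemma quintic_ne_zero: "3 \<le> y \<Longrightarrow> (e::real) = 1 \<or> e = - 1 \<Longrightarrow> y ^ 5 - y ^ 4 + e \<noteq> 0"
proof -
  assume "3 \<le> y" "e = 1 \<or> e = - 1"
  moreover from this have "3 ^ 4 * 2 \<le> y ^ 4 * (y - 1)"
    by (intro mult_mono power_mono) auto
  ultimately show ?thesis
    by (auto simp: algebra_simps eval_nat_numeral)
qed

lemma f_fun_eq:
  assumes "2 \<le> n"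
  defines "a \<equiv> real n - 1"
  shows "f_fun n = exp (mu a - 2 * mu (a + 1) + mu (a + 2)) * (1 + 1 / (a * (a + 2)))
    * (P_minus a * P_minus (a + 2) / P_plus (a + 1) ^ 2)"
proof -
  have a: "1 \<le> a" "real n = a + 1" "a + 1 - 1 = a" "a + 1 + 1 = a + 2"
    using assms by (simp_all add: a_def)
  let ?x = "mu a" and ?y = "mu (a + 1)" and ?z = "mu (a + 2)"
  have "f_fun n = exp (?x - 2 * ?y + ?z)
      * (?y ^ 14 * (?x ^ 5 - ?x ^ 4 - 1) * (?z ^ 5 - ?z ^ 4 - 1) / (?x ^ 7 * ?z ^ 7 * (?y ^ 5 - ?y ^ 4 + 1) ^ 2))"
    by (simp only: f_fun_def Let_def a(2-4) times_divide_eq_right)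
  also have "\<dots> = exp (?x - 2 * ?y + ?z)
      * (?y ^ 4 / (?x ^ 2 * ?z ^ 2) * (P_minus a * P_minus (a + 2) / P_plus (a + 1) ^ 2))"
    using quotient_normal_form[of ?x ?y ?z 1] quintic_ne_zero[of ?y 1]
      mu_ge_3[of a] mu_ge_3[of "a + 1"] mu_ge_3[of "a + 2"] a(1)
    by (simp add: P_minus_def P_plus_def)
  finally show ?thesis
    using mu_power_quotient[of a] a(1) by simp
qed

lemma g_fun_eq:
  assumes "2 \<le> n"
  defines "a \<equiv> real n - 1"
  shows "g_fun n = exp (mu a - 2 * mu (a + 1) + mu (a + 2)) * (1 + 1 / (a * (a + 2)))
    * (P_plus a * P_plus (a + 2) / P_minus (a + 1) ^ 2)"
proof -
  have a: "1 \<le> a" "real n = a + 1" "a + 1 - 1 = a" "a + 1 + 1 = a + 2"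
    using assms by (simp_all add: a_def)
  let ?x = "mu a" and ?y = "mu (a + 1)" and ?z = "mu (a + 2)"
  have "g_fun n = exp (?x - 2 * ?y + ?z)
      * (?y ^ 14 * (?x ^ 5 - ?x ^ 4 + 1) * (?z ^ 5 - ?z ^ 4 + 1) / (?x ^ 7 * ?z ^ 7 * (?y ^ 5 - ?y ^ 4 - 1) ^ 2))"
    by (simp only: g_fun_def Let_def a(2-4) times_divide_eq_right)
  also have "\<dots> = exp (?x - 2 * ?y + ?z)
      * (?y ^ 4 / (?x ^ 2 * ?z ^ 2) * (P_plus a * P_plus (a + 2) / P_minus (a + 1) ^ 2))"
    using quotient_normal_form[of ?x ?y ?z "- 1"] quintic_ne_zero[of ?y "- 1"]
      mu_ge_3[of a] mu_ge_3[of "a + 1"] mu_ge_3[of "a + 2"] a(1)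
    by (simp add: P_minus_def P_plus_def)
  finally show ?thesis
    using mu_power_quotient[of a] a(1) by simp
qed

lemma exp_mult_power_le:
  fixes u :: real
  assumes "0 \<le> u" "u \<le> 1 / 1024"
  shows "exp (487 * u) * (1 + 3 * u) ^ 4 \<le> 1 + 742 * u"
proof -
  have "exp (487 * u) \<le> 1 + 487 * u + (487 * u) ^ 2"
    using assms by (intro exp_bound) auto
  also have "(487 * u) ^ 2 \<le> 232 * u"
    using assms mult_right_mono[of u "1 / 1024" u] by (simp add: power2_eq_square)
  finally have e: "exp (487 * u) \<le> 1 + 719 * u" by simp
  have "(1 + 3 * u) ^ 4 = 1 + 12 * u + (54 + 108 * u + 81 * u ^ 2) * u ^ 2"
    by (simp add: algebra_simps eval_nat_numeral)
  also have "\<dots> \<le> 1 + 12 * u + 55 * u ^ 2"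
    using assms mult_right_mono[of u "1 / 1024" u] by (intro add_left_mono mult_right_mono)
      (auto simp: power2_eq_square)
  also have "\<dots> \<le> 1 + 13 * u"
    using assms mult_right_mono[of u "1 / 1024" u] by (simp add: power2_eq_square)
  finally have q: "(1 + 3 * u) ^ 4 \<le> 1 + 13 * u" .
  have "exp (487 * u) * (1 + 3 * u) ^ 4 \<le> (1 + 719 * u) * (1 + 13 * u)"
    using e q assms by (intro mult_mono) auto
  also have "\<dots> \<le> 1 + 742 * u"
    using assms mult_right_mono[of u "1 / 1024" u] by (simp add: algebra_simps)
  finally show ?thesis .
qed

lemma P_quotient_le:
  assumes "2 \<le> a"
  defines "u \<equiv> (1 / mu a) ^ 5"
  shows "P_plus (a + 1) * P_plus (a + 3) / P_minus (a + 2) ^ 2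
    \<le> P_minus a * P_minus (a + 2) / P_plus (a + 1) ^ 2 * (exp (125 * u) * (1 + 3 * u) ^ 4)"
proof -
  define q where "q = 1 + 3 * u"
  have pos: "0 < P_minus a" "0 < P_minus (a + 1)" "0 < P_minus (a + 2)" "0 < P_minus (a + 3)"
    using P_minus_ge[of a] P_minus_ge[of "a + 1"] P_minus_ge[of "a + 2"] P_minus_ge[of "a + 3"] assms
    by auto
  have "0 \<le> q"
    using mu_pos[of a] assms by (simp add: q_def u_def)
  have N: "P_minus (a + 1) \<le> P_plus (a + 1)" "P_plus (a + 1) \<le> q * P_minus (a + 1)"
    "P_plus (a + 3) \<le> q * P_minus (a + 3)"
    using P_minus_le_P_plus[of "a + 1"] P_plus_le[of a "a + 1"] P_plus_le[of a "a + 3"] assms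
    by (simp_all add: q_def u_def)
  have "P_minus (a + 1) ^ 2
      \<le> P_minus a * P_minus (a + 2) * exp ((dP_minus a / P_minus a) ^ 2 - d2P_minus a / P_minus a)"
    using P_minus_log_concave(2)[of a] assms by simp
  also have "\<dots> \<le> P_minus a * P_minus (a + 2) * exp (125 * u)"
    using P_minus_log_concavity_defect_le[OF assms(1)] P_minus_ge[of a] P_minus_ge[of "a + 2"] assms
    by (intro mult_left_mono) (auto simp: u_def)
  finally have concave_a: "P_minus (a + 1) ^ 2 \<le> P_minus a * P_minus (a + 2) * exp (125 * u)" .
  have concave_a1: "P_minus (a + 1) * P_minus (a + 3) \<le> P_minus (a + 2) ^ 2"
    using P_minus_log_concave(1)[of "a + 1"] assms by (simp add: add.assoc)
  have "P_plus (a + 1) ^ 3 * P_plus (a + 3) \<le> (q * P_minus (a + 1)) ^ 3 * (q * P_minus (a + 3))"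
    using N pos P_plus_bounds[of "a + 3"] assms by (intro mult_mono power_mono) auto
  also have "\<dots> = q ^ 4 * P_minus (a + 1) ^ 2 * (P_minus (a + 1) * P_minus (a + 3))"
    by (simp add: algebra_simps eval_nat_numeral)
  also have "\<dots> \<le> q ^ 4 * (P_minus a * P_minus (a + 2) * exp (125 * u)) * P_minus (a + 2) ^ 2"
    using concave_a concave_a1 pos \<open>0 \<le> q\<close> by (intro mult_mono mult_left_mono) auto
  finally have "P_plus (a + 1) ^ 3 * P_plus (a + 3)
      \<le> q ^ 4 * (P_minus a * P_minus (a + 2) * exp (125 * u)) * P_minus (a + 2) ^ 2" .
  then show ?thesis
    using N pos by (simp add: q_def field_simps eval_nat_numeral)
qed

lemma g_fun_3_lt: "g_fun 3 < f_fun 2 + 1000 / mu 1 ^ 5"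
proof -
  have "g_fun 3 = exp (mu 2 - 2 * mu 3 + mu 4) * (1 + 1 / (2 * 4)) * (P_plus 2 * P_plus 4 / P_minus 3 ^ 2)"
    using g_fun_eq[of 3] by simp
  also have "\<dots> \<le> 1 * (1 + 1 / (2 * 4)) * (1 / (161 / 243) ^ 2)"
  proof (intro mult_mono frac_le)
    show "exp (mu 2 - 2 * mu 3 + mu 4) \<le> 1"
      using mu_second_difference_nonpos[of 2] by simp
    show "P_plus 2 * P_plus 4 \<le> 1" "(161 / 243) ^ 2 \<le> P_minus 3 ^ 2"
      using P_plus_bounds[of 2] P_plus_bounds[of 4] P_minus_ge[of 3]
      by (auto intro: mult_le_one power_mono)
  qed (use P_plus_bounds[of 2] P_plus_bounds[of 4] in auto)
  also have "\<dots> < 1000 / 3.1416 ^ 5"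
    by (simp add: power_divide)
  also have "\<dots> \<le> 1000 / mu 1 ^ 5"
    using pi_power_le[of 5] pi_gt3 by (intro divide_left_mono) (auto simp: mu_def)
  also have "\<dots> \<le> f_fun 2 + 1000 / mu 1 ^ 5"
    using f_fun_eq[of 2] P_minus_ge[of 1] P_minus_ge[of 3] P_plus_bounds[of 2] by simp
  finally show ?thesis .
qed

lemma rational_factor_antimono:
  fixes a :: real
  assumes "0 < a"
  shows "1 + 1 / ((a + 1) * (a + 3)) \<le> 1 + 1 / (a * (a + 2))"
proof -
  have "a * (a + 2) \<le> (a + 1) * (a + 3)"
    using assms by (simp add: algebra_simps)
  then show ?thesis
    using assms by (intro add_left_mono divide_left_mono) auto
qed

lemma P_quotient_bounds:
  assumes "1 \<le> a"
  shows "0 < P_minus a * P_minus (a + 2) / P_plus (a + 1) ^ 2"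
    and "P_minus a * P_minus (a + 2) / P_plus (a + 1) ^ 2 \<le> 1"
proof -
  have pos: "0 < P_minus a" "0 < P_minus (a + 1)" "0 < P_minus (a + 2)"
    using P_minus_ge[of a] P_minus_ge[of "a + 1"] P_minus_ge[of "a + 2"] assms by auto
  moreover have "P_minus a * P_minus (a + 2) \<le> P_plus (a + 1) ^ 2"
    using P_minus_log_concave(1)[OF assms] P_minus_le_P_plus[of "a + 1"] pos assms
    by (auto intro: order_trans power_mono)
  ultimately show "0 < P_minus a * P_minus (a + 2) / P_plus (a + 1) ^ 2"
    and "P_minus a * P_minus (a + 2) / P_plus (a + 1) ^ 2 \<le> 1"
    using P_minus_le_P_plus[of "a + 1"] assms by auto
qed

lemma f_fun_bounds:
  assumes "3 \<le> n"
  shows "0 \<le> f_fun n \<and> f_fun n \<le> 9 / 8"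
proof -
  define a where "a = real n - 1"
  define E where "E = exp (mu a - 2 * mu (a + 1) + mu (a + 2))"
  define A where "A = 1 + 1 / (a * (a + 2))"
  define B where "B = P_minus a * P_minus (a + 2) / P_plus (a + 1) ^ 2"
  have a: "2 \<le> a"
    using assms by (simp add: a_def)
  have "0 \<le> E" "E \<le> 1"
    using mu_second_difference_nonpos[of a] a by (simp_all add: E_def)
  moreover have "1 / (a * (a + 2)) \<le> 1 / 8"
    using a mult_mono[of 2 a 4 "a + 2"] by (intro divide_left_mono) auto
  then have "0 \<le> A" "A \<le> 9 / 8"
    using a by (simp_all add: A_def)
  moreover have "0 \<le> B" "B \<le> 1"
    using P_quotient_bounds[of a] a by (simp_all add: B_def)
  ultimately have "0 \<le> E * A * B" "E * A * B \<le> 1 * (9 / 8) * 1"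
    by (simp, intro mult_mono) auto
  moreover have "f_fun n = E * A * B"
    using f_fun_eq[of n] assms by (simp add: a_def E_def A_def B_def)
  ultimately show ?thesis
    by simp
qed

lemma g_fun_succ_le:
  assumes "3 \<le> n"
  defines "u \<equiv> (1 / mu (real n - 1)) ^ 5"
  shows "g_fun (n + 1) \<le> f_fun n * (1 + 742 * u)"
proof -
  define a where "a = real n - 1"
  define E where "E = exp (mu a - 2 * mu (a + 1) + mu (a + 2))"
  define A where "A = 1 + 1 / (a * (a + 2))"
  define B where "B = P_minus a * P_minus (a + 2) / P_plus (a + 1) ^ 2"
  define D where "D = mu (a + 3) - 3 * mu (a + 2) + 3 * mu (a + 1) - mu a"
  have a: "2 \<le> a"
    using assms by (simp add: a_def)
  have f: "f_fun n = E * A * B"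
    using f_fun_eq[of n] assms by (simp add: a_def E_def A_def B_def)
  have u: "0 \<le> u" "u \<le> 1 / 1024"
    using inverse_mu_le_quarter[OF a] power_mono[of "1 / mu a" "1 / 4" 5]
    by (auto simp: u_def a_def[symmetric] power_divide)
  have "3 * pi ^ 6 / 8 * u \<le> 362 * u"
    using pi_power_le[of 6] u by (intro mult_right_mono) (auto simp: power_divide)
  then have D: "D \<le> 362 * u"
    using mu_third_difference_le[of a] a unfolding D_def u_def a_def[symmetric] by linarith
  have "g_fun (n + 1) = E * exp D * (1 + 1 / ((a + 1) * (a + 3)))
      * (P_plus (a + 1) * P_plus (a + 3) / P_minus (a + 2) ^ 2)"
    using g_fun_eq[of "n + 1"] assms
    by (simp add: a_def E_def D_def flip: exp_add) (simp add: algebra_simps)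
  also have "\<dots> \<le> E * exp D * A * (B * (exp (125 * u) * (1 + 3 * u) ^ 4))"
    using P_quotient_le[OF a] rational_factor_antimono[of a] P_plus_bounds[of "a + 1"]
      P_plus_bounds[of "a + 3"] a
    by (intro mult_mono) (auto simp: E_def A_def B_def u_def a_def[symmetric])
  also have "\<dots> = E * A * B * (exp (D + 125 * u) * (1 + 3 * u) ^ 4)"
    by (simp add: exp_add)
  also have "\<dots> \<le> E * A * B * (1 + 742 * u)"
  proof (rule mult_left_mono)
    have "exp (D + 125 * u) * (1 + 3 * u) ^ 4 \<le> exp (487 * u) * (1 + 3 * u) ^ 4"
      using D u by (intro mult_right_mono) auto
    then show "exp (D + 125 * u) * (1 + 3 * u) ^ 4 \<le> 1 + 742 * u"
      using exp_mult_power_le[of u] u by linarith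
  qed (use f_fun_bounds[OF assms(1)] in \<open>simp add: f\<close>)
  finally show ?thesis
    by (simp add: f)
qed

theorem theorem3p2:
  fixes n :: nat
  assumes "n \<ge> 2"
  shows "g_fun (n + 1) < f_fun n + 1000 / (mu (real n - 1))^5"
proof (cases "n = 2")
  case True
  then show ?thesis
    using g_fun_3_lt by simp
next
  case False
  with assms have n: "3 \<le> n"
    by simp
  define u where "u = (1 / mu (real n - 1)) ^ 5"
  have "0 < u"
    using mu_pos[of "real n - 1"] n by (simp add: u_def)
  have "g_fun (n + 1) \<le> f_fun n + (742 * f_fun n) * u"
    using g_fun_succ_le[OF n] by (simp add: u_def algebra_simps)
  also have "\<dots> < f_fun n + 1000 * u"
    using f_fun_bounds[OF n] \<open>0 < u\<close> by (intro add_strict_left_mono mult_strict_right_mono) auto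
  finally show ?thesis
    by (simp add: u_def power_divide)
qed

end
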